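(* Let $Q$ be a QNP and $P=T_D(Q)$. A policy $\pi$ for $P$ is $P$-terminating if and only if the procedure Sieve reduces the policy graph $\mathcal{G}(P,\pi)$ to an acyclic graph.
   Context: A QNP is a tuple $Q=\langle F,V,I,O,G\rangle$ with finite sets $F$ of propositional variables and $V$ of numerical (non-negative real) variables; $I$, $G$ are sets of literals $p,\neg p$ ($p\in F$), $X=0$, $X>0$ ($X\in V$); each action $a\in O$ has a precondition (set of such literals), propositional effects (set of $F$-literals), and numerical effects $N(a)$ consisting of atoms $Inc(X)$, $Dec(X)$ (at most one per variable), with $X>0$ in the precondition whenever $Dec(X)\in N(a)$. The direct translation $T_D(Q)$ is the FOND problem over $F\cup\{p_{X=0}:X\in V\}$ obtained by reading $X=0$ as $p_{X=0}$ and $X>0$ as $\neg p_{X=0}$ in $I$, $G$, and preconditions, keeping propositional effects, replacing $Inc(X)$ by the deterministic effect $\neg p_{X=0}$ and $Dec(X)$ by the nondeterministic effect $\neg p_{X=0}\mid p_{X=0}$; it has a unique initial state (atoms not in $I$ are false). For a state $\bar s$ and action $a$ applicable in it, $F(a,\bar s)$ is the set of possible successors. A policy $\pi$ for $P$ is a partial map from states to actions; a $\pi$-trajectory is a sequence $\bar s_0,\bar s_1,\dots$ from the initial state with $\pi(\bar s_i)$ applicable and $\bar s_{i+1}\in F(\pi(\bar s_i),\bar s_i)$. An action of $P$ is a $Dec(X)$ (resp. $Inc(X)$) action if it comes from an action of $Q$ with $Dec(X)$ (resp. $Inc(X)$) in its numerical effects. An infinite $\pi$-trajectory is terminating if there is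 $X\in V$ such that $\pi(\bar s)$ is a $Dec(X)$ action for some state $\bar s$ occurring infinitely often in it and $\pi(\bar s')$ is not an $Inc(X)$ action for any state $\bar s'$ occurring infinitely often in it; $\pi$ is $P$-terminating iff every infinite $\pi$-trajectory is terminating. The policy graph $\mathcal{G}(P,\pi)$ has as nodes the states of $P$ reachable from the initial state by $\pi$-trajectories, and edges $(\bar s,\bar s')$ for $\bar s'\in F(\pi(\bar s),\bar s)$, labeled by $\pi(\bar s)$. The procedure Sieve on a graph $\mathcal G$ repeats: compute the strongly connected components (SCCs) of $\mathcal G$; choose an SCC $C$ and a variable $X\in V$ such that $\pi(\bar s)$ is a $Dec(X)$ action for some $\bar s\in C$ and $\pi(\bar s)$ is an $Inc(X)$ action for no $\bar s\in C$; remove all edges $(\bar s,\bar s')$ with $\bar s,\bar s'\in C$ and $\pi(\bar s)$ a $Dec(X)$ action; until $\mathcal G$ is acyclic or no such $C,X$ exist. *)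

theory Defs
  imports Main "HOL-Library.Infinite_Set"
begin

datatype ('f, 'v) qlit = Pos 'f | Neg 'f | EqZ 'v | GtZ 'v

text \<open>Numerical effect atoms Inc(X), Dec(X). A numerical effect of an action is a map
  'v => neff option, which enforces "at most one atom per variable".\<close>
datatype neff = Inc | Dec

text \<open>A QNP <F,V,I,O,G>. Actions are abstract names of type 'a, with precondition,
  propositional effects (a set of F-literals, (p,True) = p, (p,False) = not p) and
  numerical effects.\<close>
record ('f, 'v, 'a) qnp =
  qF   :: "'f set"
  qV   :: "'v set"
  qI   :: "('f, 'v) qlit set"
  qO   :: "'a set"
  qG   :: "('f, 'v) qlit set"
  qpre :: "'a \<Rightarrow> ('f, 'v) qlit set"
  qeff :: "'a \<Rightarrow> ('f \<times> bool) set"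
  qnum :: "'a \<Rightarrow> 'v \<Rightarrow> neff option"

definition lit_ok :: "('f, 'v, 'a) qnp \<Rightarrow> ('f, 'v) qlit \<Rightarrow> bool" where
  "lit_ok Q l = (case l of Pos p \<Rightarrow> p \<in> qF Q | Neg p \<Rightarrow> p \<in> qF Q
                          | EqZ X \<Rightarrow> X \<in> qV Q | GtZ X \<Rightarrow> X \<in> qV Q)"

definition qnp_wf :: "('f, 'v, 'a) qnp \<Rightarrow> bool" where
  "qnp_wf Q \<longleftrightarrow>
     finite (qF Q) \<and> finite (qV Q) \<and> finite (qO Q) \<and>
     (\<forall>l \<in> qI Q. lit_ok Q l) \<and> (\<forall>l \<in> qG Q. lit_ok Q l) \<and>
     (\<forall>a \<in> qO Q.
        (\<forall>l \<in> qpre Q a. lit_ok Q l) \<and>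
        (\<forall>(p, b) \<in> qeff Q a. p \<in> qF Q) \<and>
        (\<forall>X. qnum Q a X \<noteq> None \<longrightarrow> X \<in> qV Q) \<and>
        (\<forall>X. qnum Q a X = Some Dec \<longrightarrow> GtZ X \<in> qpre Q a))"

text \<open>Atoms of T_D(Q): the propositional variables of Q and one atom p_{X=0} per
  numerical variable X. A state is the set of atoms that are true.\<close>
datatype ('f, 'v) atom = Prop 'f | Zero 'v

type_synonym ('f, 'v) state = "('f, 'v) atom set"

record ('s, 'a) fond =
  f_atoms :: "'s"
  f_init  :: "'s"
  f_acts  :: "'a set"
  f_app   :: "'a \<Rightarrow> 's \<Rightarrow> bool"
  f_succ  :: "'a \<Rightarrow> 's \<Rightarrow> 's set"

definition holds :: "('f, 'v) state \<Rightarrow> ('f, 'v) qlit \<Rightarrow> bool" where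
  "holds s l = (case l of Pos p \<Rightarrow> Prop p \<in> s | Neg p \<Rightarrow> Prop p \<notin> s
                        | EqZ X \<Rightarrow> Zero X \<in> s | GtZ X \<Rightarrow> Zero X \<notin> s)"

definition TD :: "('f, 'v, 'a) qnp \<Rightarrow> (('f, 'v) state, 'a) fond" where
  "TD Q = \<lparr>
     f_atoms = Prop ` qF Q \<union> Zero ` qV Q,
     f_init = {Prop p | p. Pos p \<in> qI Q} \<union> {Zero X | X. EqZ X \<in> qI Q},
     f_acts = qO Q,
     f_app = (\<lambda>a s. a \<in> qO Q \<and> (\<forall>l \<in> qpre Q a. holds s l)),
     f_succ = (\<lambda>a s.
        let s1 = (s - {Prop p | p. (p, False) \<in> qeff Q a}) \<union> {Prop p | p. (p, True) \<in> qeff Q a};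
            incs = {X. qnum Q a X = Some Inc};
            decs = {X. qnum Q a X = Some Dec}
        in {(s1 - Zero ` (incs \<union> decs)) \<union> Zero ` Z | Z. Z \<subseteq> decs}) \<rparr>"

definition is_state :: "(('f, 'v) state, 'a) fond \<Rightarrow> ('f, 'v) state \<Rightarrow> bool" where
  "is_state P s \<longleftrightarrow> s \<subseteq> f_atoms P"

type_synonym ('f, 'v, 'a) policy = "('f, 'v) state \<Rightarrow> 'a option"

definition is_policy :: "(('f, 'v) state, 'a) fond \<Rightarrow> ('f, 'v, 'a) policy \<Rightarrow> bool" where
  "is_policy P \<pi> \<longleftrightarrow> (\<forall>s a. \<pi> s = Some a \<longrightarrow> is_state P s \<and> a \<in> f_acts P)"

definition pi_step :: "(('f, 'v) state, 'a) fond \<Rightarrow> ('f, 'v, 'a) policy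
                        \<Rightarrow> ('f, 'v) state \<Rightarrow> ('f, 'v) state \<Rightarrow> bool" where
  "pi_step P \<pi> s s' \<longleftrightarrow> (\<exists>a. \<pi> s = Some a \<and> f_app P a s \<and> s' \<in> f_succ P a s)"

definition infinite_traj :: "(('f, 'v) state, 'a) fond \<Rightarrow> ('f, 'v, 'a) policy
                              \<Rightarrow> (nat \<Rightarrow> ('f, 'v) state) \<Rightarrow> bool" where
  "infinite_traj P \<pi> t \<longleftrightarrow> t 0 = f_init P \<and> (\<forall>i. pi_step P \<pi> (t i) (t (Suc i)))"

definition dec_at :: "('f, 'v, 'a) qnp \<Rightarrow> ('f, 'v, 'a) policy \<Rightarrow> ('f, 'v) state \<Rightarrow> 'v \<Rightarrow> bool" where
  "dec_at Q \<pi> s X \<longleftrightarrow> (\<exists>a. \<pi> s = Some a \<and> qnum Q a X = Some Dec)"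

definition inc_at :: "('f, 'v, 'a) qnp \<Rightarrow> ('f, 'v, 'a) policy \<Rightarrow> ('f, 'v) state \<Rightarrow> 'v \<Rightarrow> bool" where
  "inc_at Q \<pi> s X \<longleftrightarrow> (\<exists>a. \<pi> s = Some a \<and> qnum Q a X = Some Inc)"

definition terminating_traj :: "('f, 'v, 'a) qnp \<Rightarrow> ('f, 'v, 'a) policy
                                 \<Rightarrow> (nat \<Rightarrow> ('f, 'v) state) \<Rightarrow> bool" where
  "terminating_traj Q \<pi> t \<longleftrightarrow>
     (\<exists>X \<in> qV Q. (\<exists>s. (\<exists>\<^sub>\<infinity>i. t i = s) \<and> dec_at Q \<pi> s X) \<and>
                 (\<forall>s'. (\<exists>\<^sub>\<infinity>i. t i = s') \<longrightarrow> \<not> inc_at Q \<pi> s' X))"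

definition P_terminating :: "('f, 'v, 'a) qnp \<Rightarrow> ('f, 'v, 'a) policy \<Rightarrow> bool" where
  "P_terminating Q \<pi> \<longleftrightarrow>
     (\<forall>t. infinite_traj (TD Q) \<pi> t \<longrightarrow> terminating_traj Q \<pi> t)"

definition pg_nodes :: "(('f, 'v) state, 'a) fond \<Rightarrow> ('f, 'v, 'a) policy \<Rightarrow> ('f, 'v) state set" where
  "pg_nodes P \<pi> = {s. (pi_step P \<pi>)\<^sup>*\<^sup>* (f_init P) s}"

definition pg_edges :: "(('f, 'v) state, 'a) fond \<Rightarrow> ('f, 'v, 'a) policy
                         \<Rightarrow> (('f, 'v) state \<times> ('f, 'v) state) set" where
  "pg_edges P \<pi> = {(s, s'). s \<in> pg_nodes P \<pi> \<and> pi_step P \<pi> s s'}"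

text \<open>Trivial SCCs (single nodes without self-loop) have no internal edges, so choosing them in
  Sieve would remove nothing; they are excluded so that every Sieve iteration is meaningful.\<close>
definition is_scc :: "('s \<times> 's) set \<Rightarrow> 's set \<Rightarrow> bool" where
  "is_scc E C \<longleftrightarrow>
     (\<exists>x \<in> C. \<exists>y \<in> C. (x, y) \<in> E) \<and>
     (\<forall>x \<in> C. \<forall>y \<in> C. (x, y) \<in> E\<^sup>*) \<and>
     (\<forall>x \<in> C. \<forall>y. (x, y) \<in> E\<^sup>* \<and> (y, x) \<in> E\<^sup>* \<longrightarrow> y \<in> C)"

definition sieve_step :: "('f, 'v, 'a) qnp \<Rightarrow> ('f, 'v, 'a) policy
     \<Rightarrow> (('f, 'v) state \<times> ('f, 'v) state) set \<Rightarrow> (('f, 'v) state \<times> ('f, 'v) state) set \<Rightarrow> bool" where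
  "sieve_step Q \<pi> E E' \<longleftrightarrow>
     (\<exists>C X. is_scc E C \<and> X \<in> qV Q \<and>
            (\<exists>s \<in> C. dec_at Q \<pi> s X) \<and> (\<forall>s \<in> C. \<not> inc_at Q \<pi> s X) \<and>
            E' = E - {(s, s'). s \<in> C \<and> s' \<in> C \<and> dec_at Q \<pi> s X})"

definition sieve_result :: "('f, 'v, 'a) qnp \<Rightarrow> ('f, 'v, 'a) policy
     \<Rightarrow> (('f, 'v) state \<times> ('f, 'v) state) set \<Rightarrow> (('f, 'v) state \<times> ('f, 'v) state) set \<Rightarrow> bool" where
  "sieve_result Q \<pi> E0 E \<longleftrightarrow>
     (\<lambda>A B. \<not> acyclic A \<and> sieve_step Q \<pi> A B)\<^sup>*\<^sup>* E0 E \<and>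
     (acyclic E \<or> \<not> (\<exists>E'. sieve_step Q \<pi> E E'))"

definition sieve_succeeds :: "('f, 'v, 'a) qnp \<Rightarrow> ('f, 'v, 'a) policy \<Rightarrow> bool" where
  "sieve_succeeds Q \<pi> \<longleftrightarrow>
     (\<forall>E. sieve_result Q \<pi> (pg_edges (TD Q) \<pi>) E \<longrightarrow> acyclic E)"

end

theory Submission
  imports Defs "HOL-Library.Omega_Words_Fun" "HOL-Library.Transitive_Closure_Table"
begin

text \<open>
  The policy graph is finite, so an infinite \<open>\<pi>\<close>-trajectory visits a finite set of states
  infinitely often (its limit), and these states are strongly connected by the edges it
  takes infinitely often (its recurrent edges), which therefore contain a cycle.

  If a trajectory is not terminating, every variable decremented in its limit is also
  incremented there. Any SCC that a Sieve step chooses and that contains the source of a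
  recurrent edge contains the whole limit, so the step never removes a recurrent edge and
  the final graph stays cyclic.

  Conversely, if Sieve stops at a cyclic graph, take one of its SCCs \<open>C\<close>. Stopping means
  that every variable decremented in \<open>C\<close> is incremented in \<open>C\<close>. A lasso-shaped trajectory
  that reaches \<open>C\<close> and then repeats a closed walk covering \<open>C\<close> has limit exactly \<open>C\<close>, so
  it is not terminating.
\<close>

definition is_run :: "('a \<Rightarrow> 'a \<Rightarrow> bool) \<Rightarrow> 'a word \<Rightarrow> bool" where
  "is_run r w \<longleftrightarrow> (\<forall>i. r (w i) (w (Suc i)))"

lemma rtrancl_eq_rtrancl_path: "(x, y) \<in> E\<^sup>* \<longleftrightarrow> (\<exists>xs. rtrancl_path (\<lambda>a b. (a, b) \<in> E) x xs y)"
  by (simp add: rtranclp_eq_rtrancl_path[symmetric] rtranclp_rtrancl_eq)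

lemma rtrancl_path_last: "rtrancl_path r x xs y \<Longrightarrow> xs \<noteq> [] \<Longrightarrow> last xs = y"
  by (induction rule: rtrancl_path.induct) (auto elim: rtrancl_path.cases)

lemma rtrancl_path_nth:
  "rtrancl_path r x xs y \<Longrightarrow> i < length xs \<Longrightarrow> r ((x # xs) ! i) (xs ! i)"
proof (induction arbitrary: i rule: rtrancl_path.induct)
  case (step x y ys z)
  then show ?case by (cases i) auto
qed simp

lemma rtrancl_path_mono:
  "rtrancl_path r x xs y \<Longrightarrow> (\<And>a b. r a b \<Longrightarrow> s a b) \<Longrightarrow> rtrancl_path s x xs y"
  by (induction rule: rtrancl_path.induct) (auto intro: rtrancl_path.intros)

lemma rtrancl_path_set:
  assumes "rtrancl_path r x xs y" and "v \<in> set xs"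
  shows "r\<^sup>*\<^sup>* x v \<and> r\<^sup>*\<^sup>* v y"
proof -
  obtain ys zs where "xs = ys @ v # zs" using split_list[OF assms(2)] by blast
  with assms(1) obtain "rtrancl_path r x (ys @ [v]) v" and "rtrancl_path r v zs y"
    by (auto elim: rtrancl_path_appendE)
  then show ?thesis by (auto simp: rtranclp_eq_rtrancl_path)
qed

lemma is_run_build: "is_run r (a ## w) \<longleftrightarrow> r a (w 0) \<and> is_run r w"
  unfolding is_run_def by (metis build.simps not0_implies_Suc)

lemma is_run_rtranclp: "is_run r w \<Longrightarrow> r\<^sup>*\<^sup>* (w 0) (w i)"
  unfolding is_run_def by (induction i) (auto intro: rtranclp.rtrancl_into_rtrancl)

lemma is_run_conc:
  "rtrancl_path r x p y \<Longrightarrow> r y (w 0) \<Longrightarrow> is_run r w \<Longrightarrow> is_run r ((x # p) \<frown> w)"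
  by (induction rule: rtrancl_path.induct) (simp_all add: is_run_build)

lemma is_run_iter:
  assumes path: "rtrancl_path r c vs c" and ne: "vs \<noteq> []"
  shows "is_run r vs\<^sup>\<omega>"
  unfolding is_run_def
proof
  fix i
  define n where "n = length vs"
  have n: "0 < n" using ne by (simp add: n_def)
  \<comment> \<open>The closed walk ends in c, so position i of the loop is the predecessor of position i+1
    on the path c vs.\<close>
  have "vs ! (i mod n) = (c # vs) ! (Suc i mod n)"
    using rtrancl_path_last[OF path ne] ne n
    by (auto simp: mod_Suc last_conv_nth n_def) (metis diff_Suc_Suc minus_nat.diff_0)
  moreover have "r ((c # vs) ! (Suc i mod n)) (vs ! (Suc i mod n))"
    using rtrancl_path_nth[OF path] n by (simp add: n_def)
  ultimately show "r (vs\<^sup>\<omega> i) (vs\<^sup>\<omega> (Suc i))" using n by (simp add: n_def)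
qed

lemma lasso_run:
  assumes "rtrancl_path r x us c" and "rtrancl_path r c vs c" and "vs \<noteq> []"
  shows "is_run r ((x # us) \<frown> vs\<^sup>\<omega>)"
proof (rule is_run_conc[OF assms(1)])
  show "r c (vs\<^sup>\<omega> 0)" using rtrancl_path_nth[OF assms(2), of 0] assms(3) by simp
  show "is_run r vs\<^sup>\<omega>" using is_run_iter[OF assms(2,3)] .
qed

lemma is_scc_closed:
  "is_scc E C \<Longrightarrow> x \<in> C \<Longrightarrow> (x, y) \<in> E\<^sup>* \<Longrightarrow> (y, x) \<in> E\<^sup>* \<Longrightarrow> y \<in> C"
  unfolding is_scc_def by blast

lemma is_scc_rtrancl: "is_scc E C \<Longrightarrow> x \<in> C \<Longrightarrow> y \<in> C \<Longrightarrow> (x, y) \<in> E\<^sup>*"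
  unfolding is_scc_def by blast

lemma is_scc_edge_from:
  assumes scc: "is_scc E C" and "s \<in> C"
  obtains s' where "s' \<in> C" and "(s, s') \<in> E"
proof -
  obtain x y where xy: "x \<in> C" "y \<in> C" "(x, y) \<in> E" using scc unfolding is_scc_def by blast
  have "(s, y) \<in> E\<^sup>+"
    using is_scc_rtrancl[OF scc \<open>s \<in> C\<close> xy(1)] xy(3) by (rule rtrancl_into_trancl1)
  then obtain s' where s': "(s, s') \<in> E" "(s', y) \<in> E\<^sup>*" by (meson tranclD)
  have "(y, s) \<in> E\<^sup>*" using is_scc_rtrancl[OF scc xy(2) \<open>s \<in> C\<close>] .
  then have "s' \<in> C" using is_scc_closed[OF scc \<open>s \<in> C\<close>] s' by (meson rtrancl_trans r_into_rtrancl)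
  with s' that show thesis by blast
qed

lemma is_scc_of_cycle:
  assumes "(x, x) \<in> E\<^sup>+"
  shows "is_scc E {y. (x, y) \<in> E\<^sup>* \<and> (y, x) \<in> E\<^sup>*}"
proof -
  obtain y where "(x, y) \<in> E" "(y, x) \<in> E\<^sup>*" using assms by (meson tranclD)
  then show ?thesis unfolding is_scc_def by (blast intro: rtrancl_trans)
qed

lemma is_scc_subset_Domain: "is_scc E C \<Longrightarrow> C \<subseteq> Domain E"
  by (blast elim: is_scc_edge_from)

lemma closed_walk_covering_scc:
  assumes scc: "is_scc E C" and "x \<in> C" and "finite A" and "A \<subseteq> C"
  shows "\<exists>vs. vs \<noteq> [] \<and> rtrancl_path (\<lambda>a b. (a, b) \<in> E) x vs x \<and> A \<subseteq> set vs"
  using \<open>finite A\<close> \<open>A \<subseteq> C\<close>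
proof (induction rule: finite_induct)
  case empty
  obtain d where "d \<in> C" "(x, d) \<in> E" using is_scc_edge_from[OF scc \<open>x \<in> C\<close>] .
  moreover obtain ps where "rtrancl_path (\<lambda>a b. (a, b) \<in> E) d ps x"
    using is_scc_rtrancl[OF scc \<open>d \<in> C\<close> \<open>x \<in> C\<close>]
    by (auto simp: rtrancl_eq_rtrancl_path)
  ultimately have "rtrancl_path (\<lambda>a b. (a, b) \<in> E) x (d # ps) x"
    by (auto intro: rtrancl_path.step)
  then show ?case by blast
next
  case (insert a A)
  then obtain vs where vs: "vs \<noteq> []" "rtrancl_path (\<lambda>a b. (a, b) \<in> E) x vs x" "A \<subseteq> set vs"
    by blast
  have "a \<in> C" using insert.prems by blast
  obtain ps where ps: "rtrancl_path (\<lambda>a b. (a, b) \<in> E) x ps a"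
    using is_scc_rtrancl[OF scc \<open>x \<in> C\<close> \<open>a \<in> C\<close>]
    by (auto simp: rtrancl_eq_rtrancl_path)
  obtain qs where qs: "rtrancl_path (\<lambda>a b. (a, b) \<in> E) a qs x"
    using is_scc_rtrancl[OF scc \<open>a \<in> C\<close> \<open>x \<in> C\<close>]
    by (auto simp: rtrancl_eq_rtrancl_path)
  have "rtrancl_path (\<lambda>a b. (a, b) \<in> E) x (vs @ ps @ qs) x"
    using rtrancl_path_trans[OF vs(2) rtrancl_path_trans[OF ps qs]] .
  moreover have "a \<in> set (vs @ ps)"
  proof (cases "ps = []")
    case True
    then have "a = x" using ps by (auto elim: rtrancl_path.cases)
    then show ?thesis using rtrancl_path_last[OF vs(2,1)] last_in_set[OF vs(1)] by simp
  next
    case False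
    then show ?thesis using rtrancl_path_last[OF ps] last_in_set by fastforce
  qed
  ultimately show ?case using vs by (intro exI[of _ "vs @ ps @ qs"]) auto
qed

lemma scc_lasso_run:
  assumes scc: "is_scc E C" and "finite C" and "x \<in> C" and "r\<^sup>*\<^sup>* x0 x"
    and E: "\<And>a b. (a, b) \<in> E \<Longrightarrow> r a b"
  shows "\<exists>w. w 0 = x0 \<and> is_run r w \<and> limit w = C"
proof -
  obtain vs where vs: "vs \<noteq> []" "rtrancl_path (\<lambda>a b. (a, b) \<in> E) x vs x" "C \<subseteq> set vs"
    using closed_walk_covering_scc[OF scc \<open>x \<in> C\<close> \<open>finite C\<close>] by blast
  have "set vs \<subseteq> C"
  proof
    fix v assume "v \<in> set vs"
    then have "(x, v) \<in> E\<^sup>*" "(v, x) \<in> E\<^sup>*"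
      using rtrancl_path_set[OF vs(2)] by (simp_all add: rtranclp_rtrancl_eq)
    then show "v \<in> C" using is_scc_closed[OF scc \<open>x \<in> C\<close>] by blast
  qed
  obtain us where us: "rtrancl_path r x0 us x"
    using \<open>r\<^sup>*\<^sup>* x0 x\<close> unfolding rtranclp_eq_rtrancl_path by blast
  have "rtrancl_path r x vs x" using vs(2) by (rule rtrancl_path_mono) (rule E)
  then have "is_run r ((x0 # us) \<frown> vs\<^sup>\<omega>)" using lasso_run[OF us _ vs(1)] by blast
  moreover have "limit ((x0 # us) \<frown> vs\<^sup>\<omega>) = C"
    using vs(1,3) \<open>set vs \<subseteq> C\<close> unfolding limit_conc by simp
  ultimately show ?thesis by (intro exI[of _ "(x0 # us) \<frown> vs\<^sup>\<omega>"]) simp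
qed

definition recurrent_edges :: "'a word \<Rightarrow> ('a \<times> 'a) set" where
  "recurrent_edges w = limit (\<lambda>i. (w i, w (Suc i)))"

lemma recurrent_edges_subset_steps: "recurrent_edges w \<subseteq> range (\<lambda>i. (w i, w (Suc i)))"
  unfolding recurrent_edges_def by (rule limit_in_range)

lemma recurrent_edges_limit:
  assumes "(a, b) \<in> recurrent_edges w"
  shows "a \<in> limit w" and "b \<in> limit w"
proof -
  have "fst (a, b) \<in> limit (fst \<circ> (\<lambda>i. (w i, w (Suc i))))"
    and "snd (a, b) \<in> limit (snd \<circ> (\<lambda>i. (w i, w (Suc i))))"
    using assms unfolding recurrent_edges_def by (intro limit_o; assumption)+
  moreover have "snd \<circ> (\<lambda>i. (w i, w (Suc i))) = suffix 1 w" by (auto simp: suffix_def)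
  ultimately show "a \<in> limit w" and "b \<in> limit w" by (simp_all add: comp_def)
qed

lemma finite_range_steps:
  "finite (range w) \<Longrightarrow> finite (range (\<lambda>i. (w i, w (Suc i))))"
  by (rule finite_subset[of _ "range w \<times> range w"]) auto

lemma rtrancl_of_steps:
  assumes "\<And>m. i \<le> m \<Longrightarrow> m < j \<Longrightarrow> (w m, w (Suc m)) \<in> R" and "i \<le> j"
  shows "(w i, w j) \<in> R\<^sup>*"
  using \<open>i \<le> j\<close> assms(1) by (induction j rule: dec_induct) (auto intro: rtrancl_into_rtrancl)

lemma limit_connected_by_recurrent_edges:
  assumes fin: "finite (range w)" and "a \<in> limit w" and "b \<in> limit w"
  shows "(a, b) \<in> (recurrent_edges w)\<^sup>*"
proof -
  \<comment> \<open>From some position k on, only recurrent edges are traversed.\<close>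
  obtain k where k: "recurrent_edges w = range (suffix k (\<lambda>i. (w i, w (Suc i))))"
    using limit_is_suffix[OF finite_range_steps[OF fin]] unfolding recurrent_edges_def by blast
  obtain i where "k \<le> i" "w i = a"
    using \<open>a \<in> limit w\<close> by (auto simp: limit_iff_frequent INFM_nat_le)
  moreover obtain j where "i \<le> j" "w j = b"
    using \<open>b \<in> limit w\<close> by (auto simp: limit_iff_frequent INFM_nat_le)
  moreover have "(w m, w (Suc m)) \<in> recurrent_edges w" if "k \<le> m" for m
    using that unfolding k by (auto intro!: image_eqI[of _ _ "m - k"])
  ultimately show ?thesis using rtrancl_of_steps[of i j w] by auto
qed

lemma recurrent_edges_cyclic:
  assumes fin: "finite (range w)"
  shows "\<not> acyclic (recurrent_edges w)"
proof -
  obtain p where "p \<in> recurrent_edges w"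
    using limit_nonempty[OF finite_range_steps[OF fin]] unfolding recurrent_edges_def by blast
  then obtain a b where ab: "(a, b) \<in> recurrent_edges w" by (cases p) blast
  have "(b, a) \<in> (recurrent_edges w)\<^sup>*"
    using limit_connected_by_recurrent_edges[OF fin] recurrent_edges_limit[OF ab] by blast
  with ab have "(a, a) \<in> (recurrent_edges w)\<^sup>+" by (rule rtrancl_into_trancl2)
  then show ?thesis unfolding acyclic_def by blast
qed

definition dec_without_inc ::
  "('f, 'v, 'a) qnp \<Rightarrow> ('f, 'v, 'a) policy \<Rightarrow> ('f, 'v) state set \<Rightarrow> 'v \<Rightarrow> bool" where
  "dec_without_inc Q \<pi> S X \<longleftrightarrow>
     X \<in> qV Q \<and> (\<exists>s \<in> S. dec_at Q \<pi> s X) \<and> (\<forall>s \<in> S. \<not> inc_at Q \<pi> s X)"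

lemma terminating_traj_iff_limit:
  "terminating_traj Q \<pi> t \<longleftrightarrow> (\<exists>X. dec_without_inc Q \<pi> (limit t) X)"
  unfolding terminating_traj_def dec_without_inc_def limit_def by blast

lemma sieve_step_iff:
  "sieve_step Q \<pi> E E' \<longleftrightarrow>
     (\<exists>C X. is_scc E C \<and> dec_without_inc Q \<pi> C X \<and>
            E' = E - {(s, s'). s \<in> C \<and> s' \<in> C \<and> dec_at Q \<pi> s X})"
  unfolding sieve_step_def dec_without_inc_def by blast

lemma infinite_traj_iff_run:
  "infinite_traj P \<pi> t \<longleftrightarrow> t 0 = f_init P \<and> is_run (pi_step P \<pi>) t"
  unfolding infinite_traj_def is_run_def ..

lemma TD_init_subset_atoms: "qnp_wf Q \<Longrightarrow> f_init (TD Q) \<subseteq> f_atoms (TD Q)"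
  unfolding qnp_wf_def lit_ok_def by (fastforce simp: TD_def)

lemma TD_succ_subset_atoms:
  assumes wf: "qnp_wf Q" and "s \<subseteq> f_atoms (TD Q)" and "pi_step (TD Q) \<pi> s s'"
  shows "s' \<subseteq> f_atoms (TD Q)"
proof -
  obtain a where a: "a \<in> qO Q" "s' \<in> f_succ (TD Q) a s"
    using assms(3) unfolding pi_step_def by (auto simp: TD_def)
  have "p \<in> qF Q" if "(p, b) \<in> qeff Q a" for p b
    using wf a(1) that unfolding qnp_wf_def by fastforce
  moreover have "X \<in> qV Q" if "qnum Q a X = Some Dec" for X
    using wf a(1) that unfolding qnp_wf_def by fastforce
  ultimately show ?thesis using a(2) assms(2) by (auto simp: TD_def Let_def)
qed

lemma finite_pg_nodes:
  assumes wf: "qnp_wf Q"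
  shows "finite (pg_nodes (TD Q) \<pi>)"
proof -
  have "s \<subseteq> f_atoms (TD Q)" if "(pi_step (TD Q) \<pi>)\<^sup>*\<^sup>* (f_init (TD Q)) s" for s
    using that
  proof induction
    case base
    show ?case using TD_init_subset_atoms[OF wf] .
  next
    case (step y z)
    then show ?case using TD_succ_subset_atoms[OF wf] by blast
  qed
  then have "pg_nodes (TD Q) \<pi> \<subseteq> Pow (f_atoms (TD Q))" unfolding pg_nodes_def by blast
  moreover have "finite (f_atoms (TD Q))" using wf by (simp add: TD_def qnp_wf_def)
  ultimately show ?thesis by (meson finite_Pow_iff finite_subset)
qed

lemma pg_edges_subset_nodes: "pg_edges P \<pi> \<subseteq> pg_nodes P \<pi> \<times> pg_nodes P \<pi>"
  unfolding pg_edges_def pg_nodes_def by auto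

lemma finite_pg_edges: "qnp_wf Q \<Longrightarrow> finite (pg_edges (TD Q) \<pi>)"
  using finite_subset[OF pg_edges_subset_nodes] finite_pg_nodes by blast

lemma infinite_traj_in_pg_nodes: "infinite_traj P \<pi> t \<Longrightarrow> t i \<in> pg_nodes P \<pi>"
  unfolding infinite_traj_iff_run pg_nodes_def using is_run_rtranclp by fastforce

lemma recurrent_edges_subset_pg_edges:
  "infinite_traj P \<pi> t \<Longrightarrow> recurrent_edges t \<subseteq> pg_edges P \<pi>"
  using recurrent_edges_subset_steps infinite_traj_in_pg_nodes
  unfolding pg_edges_def infinite_traj_def by blast

lemma finite_range_infinite_traj: "qnp_wf Q \<Longrightarrow> infinite_traj (TD Q) \<pi> t \<Longrightarrow> finite (range t)"
  using finite_pg_nodes infinite_traj_in_pg_nodes by (meson finite_subset image_subsetI)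

lemma sieve_step_psubset:
  assumes "sieve_step Q \<pi> E E'"
  shows "E' \<subset> E"
proof -
  obtain C X s where "is_scc E C" "s \<in> C" "dec_at Q \<pi> s X"
    and "E' = E - {(s, s'). s \<in> C \<and> s' \<in> C \<and> dec_at Q \<pi> s X}"
    using assms unfolding sieve_step_def by blast
  moreover obtain s' where "s' \<in> C" "(s, s') \<in> E"
    using is_scc_edge_from[OF \<open>is_scc E C\<close> \<open>s \<in> C\<close>] .
  ultimately show ?thesis by blast
qed

lemma shrinking_relation_has_normal_form:
  assumes "finite E" and shrinks: "\<And>A B. R A B \<Longrightarrow> B \<subset> A"
  shows "\<exists>E'. R\<^sup>*\<^sup>* E E' \<and> \<not> (\<exists>E''. R E' E'')"
  using assms(1)
proof (induction rule: finite_psubset_induct)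
  case (psubset A)
  show ?case
  proof (cases "\<exists>B. R A B")
    case True
    then obtain B where "R A B" by blast
    then obtain E' where "R\<^sup>*\<^sup>* B E'" and "\<not> (\<exists>E''. R E' E'')"
      using psubset.IH[OF shrinks] by blast
    moreover have "R\<^sup>*\<^sup>* A E'"
      using \<open>R A B\<close> \<open>R\<^sup>*\<^sup>* B E'\<close> by (rule converse_rtranclp_into_rtranclp)
    ultimately show ?thesis by blast
  next
    case False
    then show ?thesis by blast
  qed
qed

lemma sieve_result_exists:
  assumes "finite E0"
  shows "\<exists>E. sieve_result Q \<pi> E0 E"
proof -
  obtain E where "(\<lambda>A B. \<not> acyclic A \<and> sieve_step Q \<pi> A B)\<^sup>*\<^sup>* E0 E"
    and "\<not> (\<exists>E'. \<not> acyclic E \<and> sieve_step Q \<pi> E E')"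
    using shrinking_relation_has_normal_form[OF assms, of "\<lambda>A B. \<not> acyclic A \<and> sieve_step Q \<pi> A B"]
      sieve_step_psubset by blast
  then show ?thesis unfolding sieve_result_def by blast
qed

lemma sieve_result_subset:
  assumes "sieve_result Q \<pi> E0 E"
  shows "E \<subseteq> E0"
proof -
  have "(\<lambda>A B. \<not> acyclic A \<and> sieve_step Q \<pi> A B)\<^sup>*\<^sup>* E0 E"
    using assms unfolding sieve_result_def by blast
  then show ?thesis by induction (auto dest: sieve_step_psubset)
qed

lemma infinite_traj_through_scc:
  assumes wf: "qnp_wf Q" and E: "E \<subseteq> pg_edges (TD Q) \<pi>" and scc: "is_scc E C"
  shows "\<exists>t. infinite_traj (TD Q) \<pi> t \<and> limit t = C"
proof -
  have C_nodes: "C \<subseteq> pg_nodes (TD Q) \<pi>"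
    using is_scc_subset_Domain[OF scc] E pg_edges_subset_nodes by blast
  then have "finite C" using finite_pg_nodes[OF wf] by (rule finite_subset)
  obtain x where "x \<in> C" using scc unfolding is_scc_def by blast
  moreover have "(pi_step (TD Q) \<pi>)\<^sup>*\<^sup>* (f_init (TD Q)) x"
    using C_nodes \<open>x \<in> C\<close> unfolding pg_nodes_def by blast
  moreover have "pi_step (TD Q) \<pi> a b" if "(a, b) \<in> E" for a b
    using E that unfolding pg_edges_def by blast
  ultimately obtain t where "t 0 = f_init (TD Q)" "is_run (pi_step (TD Q) \<pi>) t" "limit t = C"
    using scc_lasso_run[OF scc \<open>finite C\<close>] by metis
  then show ?thesis unfolding infinite_traj_iff_run by blast
qed

lemma sieve_succeeds_if_P_terminating:
  assumes wf: "qnp_wf Q" and terminating: "P_terminating Q \<pi>"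
  shows "sieve_succeeds Q \<pi>"
  unfolding sieve_succeeds_def
proof (intro allI impI, rule ccontr)
  fix E assume result: "sieve_result Q \<pi> (pg_edges (TD Q) \<pi>) E" and "\<not> acyclic E"
  then have stuck: "\<not> (\<exists>E'. sieve_step Q \<pi> E E')" unfolding sieve_result_def by blast
  obtain x where "(x, x) \<in> E\<^sup>+" using \<open>\<not> acyclic E\<close> unfolding acyclic_def by blast
  then have scc: "is_scc E {y. (x, y) \<in> E\<^sup>* \<and> (y, x) \<in> E\<^sup>*}" (is "is_scc E ?C")
    by (rule is_scc_of_cycle)
  obtain t where "infinite_traj (TD Q) \<pi> t" and "limit t = ?C"
    using infinite_traj_through_scc[OF wf sieve_result_subset[OF result] scc] by blast
  then have "terminating_traj Q \<pi> t" using terminating unfolding P_terminating_def by blast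
  then obtain X where "dec_without_inc Q \<pi> ?C X"
    unfolding terminating_traj_iff_limit \<open>limit t = ?C\<close> by blast
  with scc stuck show False unfolding sieve_step_iff by blast
qed

lemma sieve_step_keeps_recurrent_edges:
  assumes nonterminating: "\<not> terminating_traj Q \<pi> t" and fin: "finite (range t)"
    and A: "recurrent_edges t \<subseteq> A" and step: "sieve_step Q \<pi> A B"
  shows "recurrent_edges t \<subseteq> B"
proof (rule subrelI)
  fix s s' assume e: "(s, s') \<in> recurrent_edges t"
  obtain C X where scc: "is_scc A C" and X: "dec_without_inc Q \<pi> C X"
    and B: "B = A - {(s, s'). s \<in> C \<and> s' \<in> C \<and> dec_at Q \<pi> s X}"
    using step unfolding sieve_step_iff by blast
  show "(s, s') \<in> B"
  proof (rule ccontr)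
    assume "(s, s') \<notin> B"
    then have "s \<in> C" "dec_at Q \<pi> s X" using A B e by auto
    have "s \<in> limit t" using recurrent_edges_limit(1)[OF e] .
    then obtain s'' where "s'' \<in> limit t" and "inc_at Q \<pi> s'' X"
      using nonterminating X \<open>dec_at Q \<pi> s X\<close>
      unfolding terminating_traj_iff_limit dec_without_inc_def by blast
    moreover have "(s, s'') \<in> A\<^sup>*" and "(s'', s) \<in> A\<^sup>*"
      using limit_connected_by_recurrent_edges[OF fin] \<open>s \<in> limit t\<close> \<open>s'' \<in> limit t\<close>
        rtrancl_mono[OF A] by blast+
    ultimately show False
      using is_scc_closed[OF scc \<open>s \<in> C\<close>] X unfolding dec_without_inc_def by blast
  qed
qed

lemma P_terminating_if_sieve_succeeds:
  assumes wf: "qnp_wf Q" and succeeds: "sieve_succeeds Q \<pi>"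
  shows "P_terminating Q \<pi>"
  unfolding P_terminating_def
proof (intro allI impI, rule ccontr)
  fix t assume t: "infinite_traj (TD Q) \<pi> t" and nonterminating: "\<not> terminating_traj Q \<pi> t"
  have fin: "finite (range t)" using finite_range_infinite_traj[OF wf t] .
  obtain E where result: "sieve_result Q \<pi> (pg_edges (TD Q) \<pi>) E"
    using sieve_result_exists[OF finite_pg_edges[OF wf]] by blast
  have "(\<lambda>A B. \<not> acyclic A \<and> sieve_step Q \<pi> A B)\<^sup>*\<^sup>* (pg_edges (TD Q) \<pi>) E"
    using result unfolding sieve_result_def by blast
  then have "recurrent_edges t \<subseteq> E"
  proof (induction rule: rtranclp_induct)
    case base
    show ?case using recurrent_edges_subset_pg_edges[OF t] .
  next
    case (step A B)
    then show ?case using sieve_step_keeps_recurrent_edges[OF nonterminating fin] by blast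
  qed
  moreover have "acyclic E" using succeeds result unfolding sieve_succeeds_def by blast
  ultimately show False using recurrent_edges_cyclic[OF fin] acyclic_subset by blast
qed

theorem theorem6:
  fixes Q :: "('f, 'v, 'a) qnp" and \<pi> :: "('f, 'v, 'a) policy"
  assumes "qnp_wf Q"
    and "is_policy (TD Q) \<pi>"
  shows "P_terminating Q \<pi> \<longleftrightarrow> sieve_succeeds Q \<pi>"
  using sieve_succeeds_if_P_terminating[OF assms(1)] P_terminating_if_sieve_succeeds[OF assms(1)]
  by blast

end
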